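(* Let $G$ be a finite simple graph and $u\in V(G)$. Then $A_G(u)=\{1,2,\ldots,\Gamma_G(u)\}$.
   Context: A Grundy-coloring of $G$ is a proper vertex coloring of $G$ with nonempty color classes $C_1,\ldots,C_k$ (vertices of $C_i$ have color $i$) such that for all $i<j$ every vertex of $C_j$ has a neighbor in $C_i$. For $u\in V(G)$, $\Gamma_G(u)$ is the maximum integer $j$ such that there is a Grundy-coloring of $G$ in which $u$ has color $j$, and $A_G(u)$ is the set of all integers $j$ such that there exists a Grundy-coloring of $G$ in which $u$ has color $j$. *)

theory Defs
  imports Main
begin

definition simple_graph :: "'a set \<Rightarrow> ('a \<Rightarrow> 'a \<Rightarrow> bool) \<Rightarrow> bool" where
  "simple_graph V E \<longleftrightarrow> finite V \<and> (\<forall>x y. E x y \<longrightarrow> x \<in> V \<and> y \<in> V)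
     \<and> (\<forall>x y. E x y \<longrightarrow> E y x) \<and> (\<forall>x. \<not> E x x)"

definition grundy_coloring :: "'a set \<Rightarrow> ('a \<Rightarrow> 'a \<Rightarrow> bool) \<Rightarrow> nat \<Rightarrow> ('a \<Rightarrow> nat) \<Rightarrow> bool" where
  "grundy_coloring V E k c \<longleftrightarrow>
     (\<forall>v\<in>V. c v \<in> {1..k})
     \<and> (\<forall>i\<in>{1..k}. \<exists>v\<in>V. c v = i)
     \<and> (\<forall>u\<in>V. \<forall>v\<in>V. E u v \<longrightarrow> c u \<noteq> c v)
     \<and> (\<forall>v\<in>V. \<forall>i. 1 \<le> i \<and> i < c v \<longrightarrow> (\<exists>w\<in>V. E v w \<and> c w = i))"

definition A_G :: "'a set \<Rightarrow> ('a \<Rightarrow> 'a \<Rightarrow> bool) \<Rightarrow> 'a \<Rightarrow> nat set" where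
  "A_G V E u = {j. \<exists>k c. grundy_coloring V E k c \<and> c u = j}"

definition Gamma_G :: "'a set \<Rightarrow> ('a \<Rightarrow> 'a \<Rightarrow> bool) \<Rightarrow> 'a \<Rightarrow> nat" where
  "Gamma_G V E u = Max (A_G V E u)"

end

theory Submission
  imports Defs
begin

text \<open>Shifting all colors of a Grundy coloring down by m and discarding the vertices whose
  color drops to 0 leaves a Grundy coloring of the induced subgraph on the remaining vertices;
  and a Grundy coloring of any induced subgraph extends to the whole graph by coloring the
  missing vertices one at a time with the least color not used by their neighbours (first-fit).
  So if u can get color j, it can get every color i \<le> j: shift by j - i and extend.\<close>

definition grundy_on :: "'a set \<Rightarrow> ('a \<Rightarrow> 'a \<Rightarrow> bool) \<Rightarrow> ('a \<Rightarrow> nat) \<Rightarrow> bool" where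
  "grundy_on W E c \<longleftrightarrow> (\<forall>v\<in>W. 1 \<le> c v) \<and> (\<forall>x\<in>W. \<forall>y\<in>W. E x y \<longrightarrow> c x \<noteq> c y)
     \<and> (\<forall>v\<in>W. \<forall>l. 1 \<le> l \<and> l < c v \<longrightarrow> (\<exists>w\<in>W. E v w \<and> c w = l))"

lemma grundy_on_empty: "grundy_on {} E c"
  unfolding grundy_on_def by simp

lemma grundy_coloring_imp_grundy_on:
  "grundy_coloring V E k c \<Longrightarrow> grundy_on V E c"
  unfolding grundy_coloring_def grundy_on_def by auto

lemma grundy_on_colors_below:
  assumes c: "grundy_on V E c" and "v \<in> V"
  shows "{1..c v} \<subseteq> c ` V"
proof
  fix l assume l: "l \<in> {1..c v}"
  show "l \<in> c ` V"
  proof (cases "l = c v")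
    case True
    with \<open>v \<in> V\<close> show ?thesis by blast
  next
    case False
    with l have "1 \<le> l \<and> l < c v" by simp
    with c \<open>v \<in> V\<close> show ?thesis unfolding grundy_on_def by blast
  qed
qed

lemma grundy_on_imp_grundy_coloring:
  assumes c: "grundy_on V E c" and "finite V" and "V \<noteq> {}"
  shows "grundy_coloring V E (Max (c ` V)) c"
proof -
  let ?k = "Max (c ` V)"
  have fin: "finite (c ` V)" using \<open>finite V\<close> by simp
  have "?k \<in> c ` V"
    using Max_in[OF fin] \<open>V \<noteq> {}\<close> by simp
  then obtain v where "v \<in> V" "c v = ?k" by auto
  with grundy_on_colors_below[OF c] have "{1..?k} \<subseteq> c ` V" by metis
  with c fin show ?thesis
    unfolding grundy_coloring_def grundy_on_def by auto
qed

lemma grundy_on_le_card: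
  assumes c: "grundy_on V E c" and "finite V" and "v \<in> V"
  shows "c v \<le> card V"
proof -
  have "card {1..c v} \<le> card (c ` V)"
    using grundy_on_colors_below[OF c \<open>v \<in> V\<close>] \<open>finite V\<close> by (intro card_mono) auto
  also have "\<dots> \<le> card V"
    using \<open>finite V\<close> by (rule card_image_le)
  finally show ?thesis by simp
qed

lemma grundy_on_shift:
  assumes c: "grundy_on V E c"
  shows "grundy_on {v\<in>V. m < c v} E (\<lambda>v. c v - m)"
  unfolding grundy_on_def
proof (intro conjI ballI allI impI)
  fix v l assume v: "v \<in> {v\<in>V. m < c v}" and l: "1 \<le> l \<and> l < c v - m"
  then have "v \<in> V" "1 \<le> l + m \<and> l + m < c v" by auto
  with c obtain w where "w \<in> V" "E v w" "c w = l + m"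
    unfolding grundy_on_def by blast
  with l show "\<exists>w\<in>{v\<in>V. m < c v}. E v w \<and> c w - m = l" by force
qed (use c in \<open>fastforce simp: grundy_on_def\<close>)+

lemma grundy_on_insert:
  assumes "symp E" and "irreflp E"
    and "finite W" and c: "grundy_on W E c" and "x \<notin> W"
  obtains d where "grundy_on (insert x W) E d" and "\<forall>v\<in>W. d v = c v"
proof -
  let ?free = "\<lambda>n::nat. 1 \<le> n \<and> (\<forall>w\<in>W. E x w \<longrightarrow> c w \<noteq> n)"
  define n where "n = (LEAST n. ?free n)"
  have "finite (insert 0 (c ` W))" using \<open>finite W\<close> by simp
  then obtain m :: nat where "m \<notin> insert 0 (c ` W)"
    using ex_new_if_finite[OF infinite_UNIV_nat] by blast
  then have "?free m" by auto
  then have free: "?free n"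
    unfolding n_def by (rule LeastI)
  have least: "\<not> ?free l" if "l < n" for l
    using that unfolding n_def by (rule not_less_Least)
  define d where "d = c(x := n)"
  have dW: "\<forall>v\<in>W. d v = c v"
    using \<open>x \<notin> W\<close> unfolding d_def by auto
  have "grundy_on (insert x W) E d"
    unfolding grundy_on_def
  proof (intro conjI ballI allI impI)
    fix v assume "v \<in> insert x W"
    then show "1 \<le> d v" using c free dW unfolding d_def grundy_on_def by auto
  next
    fix a b assume a: "a \<in> insert x W" and b: "b \<in> insert x W" and "E a b"
    have "a \<noteq> b" using \<open>E a b\<close> irreflpD[OF \<open>irreflp E\<close>] by blast
    consider "a = x" "b \<in> W" | "b = x" "a \<in> W" | "a \<in> W" "b \<in> W"
      using a b \<open>a \<noteq> b\<close> by blast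
    then show "d a \<noteq> d b"
    proof cases
      case 1
      with free \<open>E a b\<close> dW show ?thesis unfolding d_def by auto
    next
      case 2
      with free sympD[OF \<open>symp E\<close> \<open>E a b\<close>] dW show ?thesis unfolding d_def by auto
    next
      case 3
      with c \<open>E a b\<close> dW show ?thesis unfolding grundy_on_def by auto
    qed
  next
    fix v l assume v: "v \<in> insert x W" and l: "1 \<le> l \<and> l < d v"
    show "\<exists>w\<in>insert x W. E v w \<and> d w = l"
    proof (cases "v = x")
      case True
      with l least[of l] show ?thesis using dW unfolding d_def by auto
    next
      case False
      with v l dW have "v \<in> W" "1 \<le> l \<and> l < c v" by auto
      with c obtain w where "w \<in> W" "E v w" "c w = l"
        unfolding grundy_on_def by blast
      with dW show ?thesis by auto
    qed
  qed
  with dW that show ?thesis by blast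
qed

lemma grundy_on_extend:
  assumes "symp E" and "irreflp E"
    and "finite F" and "finite W" and "grundy_on W E c"
  obtains d where "grundy_on (W \<union> F) E d" and "\<forall>v\<in>W. d v = c v"
  using \<open>finite F\<close>
proof (induction F arbitrary: thesis rule: finite_induct)
  case empty
  with \<open>grundy_on W E c\<close> show ?case by auto
next
  case (insert x F)
  obtain d where d: "grundy_on (W \<union> F) E d" "\<forall>v\<in>W. d v = c v"
    using insert.IH by blast
  show ?case
  proof (cases "x \<in> W \<union> F")
    case True
    then have "W \<union> insert x F = W \<union> F" by auto
    with d insert.prems show ?thesis by auto
  next
    case False
    obtain d' where "grundy_on (insert x (W \<union> F)) E d'" "\<forall>v\<in>W \<union> F. d' v = d v"
      using grundy_on_insert[OF \<open>symp E\<close> \<open>irreflp E\<close> _ d(1) False] \<open>finite W\<close> \<open>finite F\<close> by blast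
    with d insert.prems show ?thesis by auto
  qed
qed

lemma simple_graphD:
  assumes "simple_graph V E"
  shows "finite V" and "symp E" and "irreflp E"
  using assms unfolding simple_graph_def symp_def irreflp_def by auto

lemma A_G_iff_grundy_on:
  assumes "finite V" and "u \<in> V"
  shows "j \<in> A_G V E u \<longleftrightarrow> (\<exists>c. grundy_on V E c \<and> c u = j)"
proof
  assume "j \<in> A_G V E u"
  then obtain k c where "grundy_coloring V E k c" "c u = j"
    unfolding A_G_def by blast
  then show "\<exists>c. grundy_on V E c \<and> c u = j"
    using grundy_coloring_imp_grundy_on by blast
next
  assume "\<exists>c. grundy_on V E c \<and> c u = j"
  then obtain c where c: "grundy_on V E c" "c u = j" by blast
  have "V \<noteq> {}" using \<open>u \<in> V\<close> by blast
  with c(1) \<open>finite V\<close> have "grundy_coloring V E (Max (c ` V)) c"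
    by (rule grundy_on_imp_grundy_coloring)
  with c(2) show "j \<in> A_G V E u"
    unfolding A_G_def by blast
qed

lemma A_G_subset:
  assumes "finite V" and "u \<in> V"
  shows "A_G V E u \<subseteq> {1..card V}"
proof
  fix j assume "j \<in> A_G V E u"
  then obtain c where c: "grundy_on V E c" "c u = j"
    using A_G_iff_grundy_on[OF assms] by blast
  then have "1 \<le> j"
    using \<open>u \<in> V\<close> unfolding grundy_on_def by blast
  moreover have "j \<le> card V"
    using grundy_on_le_card[OF c(1) assms] c(2) by simp
  ultimately show "j \<in> {1..card V}" by simp
qed

lemma A_G_nonempty:
  assumes G: "simple_graph V E" and "u \<in> V"
  shows "A_G V E u \<noteq> {}"
proof -
  note G = simple_graphD[OF G]
  obtain c :: "'a \<Rightarrow> nat" where "grundy_on ({} \<union> V) E c"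
    using grundy_on_extend[OF G(2,3) G(1) finite.emptyI grundy_on_empty] .
  then have "c u \<in> A_G V E u"
    using A_G_iff_grundy_on[OF G(1) \<open>u \<in> V\<close>] by auto
  then show ?thesis by blast
qed

lemma A_G_downward_closed:
  assumes G: "simple_graph V E" and "u \<in> V"
    and "j \<in> A_G V E u" and "1 \<le> i" and "i \<le> j"
  shows "i \<in> A_G V E u"
proof -
  note G = simple_graphD[OF G]
  obtain c where c: "grundy_on V E c" "c u = j"
    using A_G_iff_grundy_on[OF G(1) \<open>u \<in> V\<close>] \<open>j \<in> A_G V E u\<close> by blast
  define W where "W = {v\<in>V. j - i < c v}"
  have "u \<in> W" using c \<open>u \<in> V\<close> \<open>1 \<le> i\<close> \<open>i \<le> j\<close> unfolding W_def by auto
  have "finite W" using G(1) unfolding W_def by simp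
  have "grundy_on W E (\<lambda>v. c v - (j - i))"
    unfolding W_def by (rule grundy_on_shift[OF c(1)])
  then obtain d where "grundy_on (W \<union> V) E d" "\<forall>v\<in>W. d v = c v - (j - i)"
    using grundy_on_extend[OF G(2,3) G(1) \<open>finite W\<close>] by blast
  moreover have "W \<union> V = V" unfolding W_def by auto
  ultimately have "grundy_on V E d" "d u = i"
    using \<open>u \<in> W\<close> c(2) \<open>i \<le> j\<close> by auto
  then show ?thesis
    using A_G_iff_grundy_on[OF G(1) \<open>u \<in> V\<close>] by blast
qed

lemma eq_atLeastAtMost_Max_if_downward_closed:
  fixes A :: "nat set"
  assumes "finite A" and "A \<noteq> {}" and "0 \<notin> A"
    and down: "\<And>i j. j \<in> A \<Longrightarrow> 1 \<le> i \<Longrightarrow> i \<le> j \<Longrightarrow> i \<in> A"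
  shows "A = {1..Max A}"
proof
  show "A \<subseteq> {1..Max A}"
  proof
    fix x assume "x \<in> A"
    with \<open>0 \<notin> A\<close> have "1 \<le> x" by (cases x) auto
    with Max_ge[OF \<open>finite A\<close> \<open>x \<in> A\<close>] show "x \<in> {1..Max A}" by simp
  qed
  show "{1..Max A} \<subseteq> A"
    using down Max_in[OF \<open>finite A\<close> \<open>A \<noteq> {}\<close>] by auto
qed

theorem proposition1:
  fixes V :: "'a set" and E :: "'a \<Rightarrow> 'a \<Rightarrow> bool" and u :: 'a
  assumes "simple_graph V E" and "u \<in> V"
  shows "A_G V E u = {1..Gamma_G V E u}"
proof -
  have "A_G V E u \<subseteq> {1..card V}"
    using A_G_subset[OF simple_graphD(1)[OF assms(1)] assms(2)] .
  then have "finite (A_G V E u)" and "0 \<notin> A_G V E u"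
    using finite_subset by auto
  from this(1) A_G_nonempty[OF assms] this(2) A_G_downward_closed[OF assms] show ?thesis
    unfolding Gamma_G_def by (rule eq_atLeastAtMost_Max_if_downward_closed)
qed

end
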